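(* Let $M\in\mathbb{C}^{k,p}$ and let $\mathcal{S}$ and $\mathbb{P}$ be as in the context (for fixed block sizes $p_i,k_i$). Then $$\mu_{\mathcal{S}}(M)=\sup_{P\in\mathbb{P}}\rho(PM).$$
   Context: Fix positive integers $k_1,\ldots,k_n$ and $p_1,\ldots,p_n$ with $\sum k_i=k$, $\sum p_i=p$. Let $\mathcal{S}:=\{\operatorname{diag}(\Delta_1,\ldots,\Delta_n):\Delta_i\in\mathbb{C}^{p_i,k_i}\}\subseteq\mathbb{C}^{p,k}$ (block-diagonal with rectangular diagonal blocks). For $M\in\mathbb{C}^{k,p}$, the structured $\mu$-value is $\mu_{\mathcal{S}}(M):=\big(\inf\{\|\Delta\|:\Delta\in\mathcal{S},\ \det(I_p-\Delta M)=0\}\big)^{-1}$ ($\|\cdot\|$ the spectral norm), with $\mu_{\mathcal S}(M)=0$ if no such $\Delta$ exists. A matrix $P\in\mathbb{C}^{m,l}$ is partially isometric if $\|Px\|=\|x\|$ for every $x$ orthogonal to the null space of $P$. $\mathbb{P}:=\{\operatorname{diag}(P_1,\ldots,P_n): P_i\in\mathbb{C}^{p_i,k_i}\text{ partially isometric}\}$. $\rho(\cdot)$ denotes the spectral radius. *)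

theory Defs
  imports "Jordan_Normal_Form.Spectral_Radius"
begin

definition vnorm :: "complex vec \<Rightarrow> real" where
  "vnorm v = sqrt (\<Sum>i<dim_vec v. (cmod (v $ i))\<^sup>2)"

definition cinner :: "complex vec \<Rightarrow> complex vec \<Rightarrow> complex" where
  "cinner x y = (\<Sum>i<dim_vec x. x $ i * cnj (y $ i))"

definition spec_norm :: "complex mat \<Rightarrow> real" where
  "spec_norm A = Sup {vnorm (A *\<^sub>v x) | x. x \<in> carrier_vec (dim_col A) \<and> vnorm x \<le> 1}"

definition struct_set :: "nat list \<Rightarrow> nat list \<Rightarrow> complex mat set" where
  "struct_set ps ks = {diag_block_mat Ds | Ds. length Ds = length ps \<and>
      (\<forall>i<length ps. Ds ! i \<in> carrier_mat (ps ! i) (ks ! i))}"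

definition partial_isometry :: "complex mat \<Rightarrow> bool" where
  "partial_isometry P \<longleftrightarrow> (\<forall>x \<in> carrier_vec (dim_col P).
      (\<forall>y \<in> carrier_vec (dim_col P). P *\<^sub>v y = 0\<^sub>v (dim_row P) \<longrightarrow> cinner x y = 0)
      \<longrightarrow> vnorm (P *\<^sub>v x) = vnorm x)"

definition piso_set :: "nat list \<Rightarrow> nat list \<Rightarrow> complex mat set" where
  "piso_set ps ks = {diag_block_mat Ps | Ps. length Ps = length ps \<and>
      (\<forall>i<length ps. Ps ! i \<in> carrier_mat (ps ! i) (ks ! i) \<and> partial_isometry (Ps ! i))}"

definition mu_S :: "nat list \<Rightarrow> nat list \<Rightarrow> complex mat \<Rightarrow> real" where
  "mu_S ps ks M = (let D = {\<Delta> \<in> struct_set ps ks. det (1\<^sub>m (sum_list ps) - \<Delta> * M) = 0} in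
     if D = {} then 0 else inverse (Inf (spec_norm ` D)))"

end

theory Submission
  imports Defs "HOL-Complex_Analysis.Great_Picard"
begin

text \<open>
  \<open>\<mu>\<^sub>S(M) \<ge> \<rho>(PM)\<close>: if \<open>P \<in> \<P>\<close> and \<open>\<kappa>\<close> is an eigenvalue of \<open>PM\<close> with \<open>|\<kappa>| = \<rho>(PM) > 0\<close>, then
  \<open>\<Delta> = P/\<kappa>\<close> is structured, makes \<open>I - \<Delta>M\<close> singular, and has norm at most \<open>1/\<rho>(PM)\<close>
  because partial isometries are contractions.

  \<open>\<mu>\<^sub>S(M) \<le> sup \<rho>(PM)\<close>: let \<open>I - \<Delta>M\<close> be singular, \<open>\<Delta>Mx = x\<close>, and \<open>\<beta> = \<parallel>\<Delta>\<parallel>\<close>. On each block, the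
  contraction \<open>\<Delta>/\<beta>\<close> agrees on \<open>y = Mx\<close> with \<open>c\<^sub>i P\<^sub>i\<close> for a rank-one partial isometry \<open>P\<^sub>i\<close>
  and \<open>|c\<^sub>i| \<le> 1\<close>, so \<open>diag(c\<^sub>i P\<^sub>i) M\<close> has the eigenvalue \<open>1/\<beta>\<close>. The scalars are then moved
  onto the unit circle one at a time without losing an eigenvalue of modulus \<open>\<ge> 1/\<beta>\<close>: for
  \<open>F(z)\<close> affine in \<open>z\<close>, a zero of \<open>z \<mapsto> det(I - tw F(z))\<close> can only enter the unit disc,
  as \<open>t\<close> grows from \<open>0\<close>, through the unit circle (Hurwitz's theorem).
\<close>

hide_type (open) Finite_Cartesian_Product.vec
no_notation Finite_Cartesian_Product.vec_nth (infixl "$" 90)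
hide_const (open) Finite_Cartesian_Product.mat Finite_Cartesian_Product.vec Finite_Cartesian_Product.row
  Finite_Cartesian_Product.transpose Determinants.det

lemma vnorm_eq_L2_set: "vnorm v = L2_set (\<lambda>i. cmod (v $ i)) {..<dim_vec v}"
  unfolding vnorm_def L2_set_def by simp

lemma vnorm_nonneg: "vnorm v \<ge> 0"
  unfolding vnorm_def by (simp add: sum_nonneg)

lemma vnorm_power2: "(vnorm v)\<^sup>2 = (\<Sum>i<dim_vec v. (cmod (v $ i))\<^sup>2)"
  unfolding vnorm_def by (simp add: sum_nonneg)

lemma cinner_self_eq: "cinner v v = complex_of_real ((vnorm v)\<^sup>2)"
proof -
  have "cinner v v = (\<Sum>i<dim_vec v. complex_of_real ((cmod (v $ i))\<^sup>2))"
    unfolding cinner_def by (intro sum.cong refl) (simp only: complex_norm_square)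
  thus ?thesis unfolding vnorm_power2 of_real_sum .
qed

lemma cmod_cinner_self: "cmod (cinner v v) = (vnorm v)\<^sup>2"
  unfolding cinner_self_eq norm_of_real by simp

lemma vnorm_zero_vec [simp]: "vnorm (0\<^sub>v n) = 0"
  unfolding vnorm_def by simp

lemma vnorm_eq_0_iff: assumes "v \<in> carrier_vec n" shows "vnorm v = 0 \<longleftrightarrow> v = 0\<^sub>v n"
proof
  assume "vnorm v = 0"
  hence "(\<Sum>i<dim_vec v. (cmod (v $ i))\<^sup>2) = 0" using vnorm_power2[of v] by simp
  hence "\<forall>i\<in>{..<dim_vec v}. (cmod (v $ i))\<^sup>2 = 0"
    by (subst sum_nonneg_eq_0_iff[symmetric]) auto
  thus "v = 0\<^sub>v n" using assms by (intro eq_vecI) auto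
qed simp

lemma vnorm_pos: "v \<in> carrier_vec n \<Longrightarrow> v \<noteq> 0\<^sub>v n \<Longrightarrow> vnorm v > 0"
  using vnorm_eq_0_iff[of v n] vnorm_nonneg[of v] by simp

lemma vnorm_smult: "vnorm (a \<cdot>\<^sub>v v) = cmod a * vnorm v"
proof -
  have "(vnorm (a \<cdot>\<^sub>v v))\<^sup>2 = (cmod a * vnorm v)\<^sup>2"
    unfolding vnorm_power2 power_mult_distrib by (simp add: norm_mult power_mult_distrib sum_distrib_left)
  thus ?thesis using vnorm_nonneg[of v] vnorm_nonneg[of "a \<cdot>\<^sub>v v"]
    by (simp add: power2_eq_iff_nonneg)
qed

lemma vnorm_append_power2: "(vnorm (a @\<^sub>v b))\<^sup>2 = (vnorm a)\<^sup>2 + (vnorm b)\<^sup>2"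
proof -
  have "(\<Sum>i<n + m. f i) = (\<Sum>i<n. f i) + (\<Sum>i<m. f (n + i))" for n m and f :: "nat \<Rightarrow> real"
    by (induct m) (auto simp: ac_simps)
  thus ?thesis unfolding vnorm_power2 by simp
qed

lemma vnorm_append_mono: assumes "vnorm a \<le> vnorm a'" "vnorm b \<le> vnorm b'"
  shows "vnorm (a @\<^sub>v b) \<le> vnorm (a' @\<^sub>v b')"
proof (rule power2_le_imp_le)
  show "(vnorm (a @\<^sub>v b))\<^sup>2 \<le> (vnorm (a' @\<^sub>v b'))\<^sup>2"
    unfolding vnorm_append_power2 using assms by (intro add_mono power_mono) (auto simp: vnorm_nonneg)
qed (simp add: vnorm_nonneg)

lemma vnorm_append_zero_vec [simp]: "vnorm (a @\<^sub>v 0\<^sub>v n) = vnorm a" "vnorm (0\<^sub>v n @\<^sub>v a) = vnorm a"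
  by (rule power2_eq_imp_eq; simp add: vnorm_append_power2 vnorm_nonneg)+

lemma cinner_Cauchy_Schwarz: assumes "dim_vec y = dim_vec x"
  shows "cmod (cinner x y) \<le> vnorm x * vnorm y"
proof -
  have "cmod (cinner x y) \<le> (\<Sum>i<dim_vec x. cmod (x $ i) * cmod (y $ i))"
    unfolding cinner_def by (rule order.trans[OF norm_sum]) (simp add: norm_mult)
  also have "\<dots> = (\<Sum>i<dim_vec x. \<bar>cmod (x $ i)\<bar> * \<bar>cmod (y $ i)\<bar>)" by simp
  also have "\<dots> \<le> vnorm x * vnorm y" unfolding vnorm_eq_L2_set assms by (rule L2_set_mult_ineq)
  finally show ?thesis .
qed

lemma cinner_minus_left: assumes "dim_vec x = dim_vec y"
  shows "cinner (x - y) z = cinner x z - cinner y z"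
  unfolding cinner_def using assms by (simp add: left_diff_distrib sum_subtractf)

lemma cinner_minus_right: assumes "dim_vec y = dim_vec x" "dim_vec z = dim_vec x"
  shows "cinner x (y - z) = cinner x y - cinner x z"
  unfolding cinner_def using assms by (simp add: right_diff_distrib sum_subtractf)

lemma cinner_smult_left: "cinner (c \<cdot>\<^sub>v x) z = c * cinner x z"
  unfolding cinner_def by (simp add: sum_distrib_left ac_simps)

lemma cinner_smult_right: assumes "dim_vec z = dim_vec x"
  shows "cinner x (c \<cdot>\<^sub>v z) = cnj c * cinner x z"
  unfolding cinner_def using assms by (simp add: sum_distrib_left ac_simps)

lemma cinner_cnj_commute: assumes "dim_vec y = dim_vec x"
  shows "cinner x y = cnj (cinner y x)"
  unfolding cinner_def using assms by (simp add: ac_simps)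

lemma cinner_zero_left [simp]: "cinner (0\<^sub>v n) y = 0"
  unfolding cinner_def by simp

lemma mult_mat_vec_zero_vec: "A \<in> carrier_mat m n \<Longrightarrow> A *\<^sub>v 0\<^sub>v n = 0\<^sub>v m"
  by (intro eq_vecI) (auto simp: scalar_prod_def)

lemma zero_mat_mult_vec: "v \<in> carrier_vec n \<Longrightarrow> 0\<^sub>m m n *\<^sub>v v = 0\<^sub>v m"
  by (intro eq_vecI) (auto simp: scalar_prod_def)

lemma smult_mat_mult_vec:
  "A \<in> carrier_mat m n \<Longrightarrow> v \<in> carrier_vec n \<Longrightarrow> (c \<cdot>\<^sub>m A) *\<^sub>v v = c \<cdot>\<^sub>v (A *\<^sub>v v)"
  by (intro eq_vecI) (auto simp: scalar_prod_def sum_distrib_left ac_simps)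

lemma index_mult_mat_vec_sum: "A \<in> carrier_mat m n \<Longrightarrow> x \<in> carrier_vec n \<Longrightarrow> i < m \<Longrightarrow>
  (A *\<^sub>v x) $ i = (\<Sum>j<n. A $$ (i,j) * x $ j)"
  by (simp add: scalar_prod_def atLeast0LessThan)

definition adjoint_mat :: "complex mat \<Rightarrow> complex mat" where
  "adjoint_mat A = mat (dim_col A) (dim_row A) (\<lambda>(i,j). cnj (A $$ (j,i)))"

lemma adjoint_mat_carrier: "A \<in> carrier_mat m n \<Longrightarrow> adjoint_mat A \<in> carrier_mat n m"
  unfolding adjoint_mat_def by auto

lemma cinner_mult_mat_vec_left:
  assumes A: "A \<in> carrier_mat m n" and x: "x \<in> carrier_vec n" and y: "y \<in> carrier_vec m"
  shows "cinner (A *\<^sub>v x) y = cinner x (adjoint_mat A *\<^sub>v y)"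
proof -
  have "cinner (A *\<^sub>v x) y = (\<Sum>i<m. (\<Sum>j<n. A $$ (i,j) * x $ j) * cnj (y $ i))"
    unfolding cinner_def using A x y by (simp add: scalar_prod_def atLeast0LessThan)
  also have "\<dots> = (\<Sum>j<n. \<Sum>i<m. A $$ (i,j) * x $ j * cnj (y $ i))"
    by (simp add: sum_distrib_right sum.swap[of _ "{..<n}"])
  also have "\<dots> = cinner x (adjoint_mat A *\<^sub>v y)"
    unfolding cinner_def using A x y
    by (simp add: adjoint_mat_def scalar_prod_def atLeast0LessThan sum_distrib_left ac_simps)
  finally show ?thesis .
qed

definition frobenius_norm :: "complex mat \<Rightarrow> real" where
  "frobenius_norm A = sqrt (\<Sum>i<dim_row A. \<Sum>j<dim_col A. (cmod (A $$ (i,j)))\<^sup>2)"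

lemma frobenius_norm_nonneg: "frobenius_norm A \<ge> 0"
  unfolding frobenius_norm_def by (simp add: sum_nonneg)

lemma vnorm_mult_mat_vec_le_frobenius:
  assumes A: "A \<in> carrier_mat m n" and x: "x \<in> carrier_vec n"
  shows "vnorm (A *\<^sub>v x) \<le> frobenius_norm A * vnorm x"
proof -
  let ?row = "\<lambda>i. L2_set (\<lambda>j. cmod (A $$ (i,j))) {..<n}"
  have row: "(cmod ((A *\<^sub>v x) $ i))\<^sup>2 \<le> (\<Sum>j<n. (cmod (A $$ (i,j)))\<^sup>2) * (vnorm x)\<^sup>2"
    if i: "i < m" for i
  proof -
    have "cmod ((A *\<^sub>v x) $ i) \<le> (\<Sum>j<n. cmod (A $$ (i,j)) * cmod (x $ j))"
      unfolding index_mult_mat_vec_sum[OF A x i]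
      by (rule order.trans[OF norm_sum]) (simp add: norm_mult)
    also have "\<dots> = (\<Sum>j<n. \<bar>cmod (A $$ (i,j))\<bar> * \<bar>cmod (x $ j)\<bar>)" by simp
    also have "\<dots> \<le> ?row i * L2_set (\<lambda>j. cmod (x $ j)) {..<n}" by (rule L2_set_mult_ineq)
    also have "\<dots> = ?row i * vnorm x" unfolding vnorm_eq_L2_set using x by simp
    finally have "(cmod ((A *\<^sub>v x) $ i))\<^sup>2 \<le> (?row i * vnorm x)\<^sup>2"
      by (rule power_mono) simp
    also have "\<dots> = (\<Sum>j<n. (cmod (A $$ (i,j)))\<^sup>2) * (vnorm x)\<^sup>2"
      unfolding power_mult_distrib L2_set_def by (simp add: sum_nonneg)
    finally show ?thesis .
  qed
  have "(vnorm (A *\<^sub>v x))\<^sup>2 = (\<Sum>i<m. (cmod ((A *\<^sub>v x) $ i))\<^sup>2)"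
    unfolding vnorm_power2 using A by simp
  also have "\<dots> \<le> (\<Sum>i<m. (\<Sum>j<n. (cmod (A $$ (i,j)))\<^sup>2) * (vnorm x)\<^sup>2)"
    by (rule sum_mono) (use row in auto)
  also have "\<dots> = (frobenius_norm A * vnorm x)\<^sup>2"
    unfolding frobenius_norm_def power_mult_distrib using A by (simp add: sum_distrib_right sum_nonneg)
  finally show ?thesis
    by (rule power2_le_imp_le) (simp add: frobenius_norm_nonneg vnorm_nonneg)
qed

lemma bdd_above_spec_norm_set:
  "bdd_above {vnorm (A *\<^sub>v x) | x. x \<in> carrier_vec (dim_col A) \<and> vnorm x \<le> 1}"
proof (rule bdd_aboveI[of _ "frobenius_norm A"], clarify)
  fix x assume x: "x \<in> carrier_vec (dim_col A)" "vnorm x \<le> 1"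
  have "vnorm (A *\<^sub>v x) \<le> frobenius_norm A * vnorm x"
    by (rule vnorm_mult_mat_vec_le_frobenius[OF _ x(1)]) auto
  also have "\<dots> \<le> frobenius_norm A"
    using mult_left_mono[OF x(2) frobenius_norm_nonneg] by simp
  finally show "vnorm (A *\<^sub>v x) \<le> frobenius_norm A" .
qed

lemma spec_norm_nonneg: "spec_norm A \<ge> 0"
proof -
  have "vnorm (A *\<^sub>v 0\<^sub>v (dim_col A)) \<le> spec_norm A"
    unfolding spec_norm_def by (rule cSup_upper[OF _ bdd_above_spec_norm_set]) auto
  thus ?thesis using vnorm_nonneg order.trans by blast
qed

lemma vnorm_mult_mat_vec_le_spec_norm: assumes x: "x \<in> carrier_vec (dim_col A)"
  shows "vnorm (A *\<^sub>v x) \<le> spec_norm A * vnorm x"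
proof (cases "x = 0\<^sub>v (dim_col A)")
  case True
  thus ?thesis using mult_mat_vec_zero_vec[of A "dim_row A" "dim_col A"] by simp
next
  case False
  hence pos: "vnorm x > 0" using vnorm_pos[OF x] by simp
  define y where "y = (1 / vnorm x) \<cdot>\<^sub>v x"
  have y: "y \<in> carrier_vec (dim_col A)" "vnorm y \<le> 1"
    using x pos unfolding y_def by (auto simp: vnorm_smult norm_divide)
  have "vnorm (A *\<^sub>v y) \<le> spec_norm A"
    unfolding spec_norm_def by (rule cSup_upper[OF _ bdd_above_spec_norm_set]) (use y in blast)
  moreover have "A *\<^sub>v y = (1 / vnorm x) \<cdot>\<^sub>v (A *\<^sub>v x)"
    unfolding y_def by (rule mult_mat_vec[OF _ x]) auto
  ultimately have "vnorm (A *\<^sub>v x) / vnorm x \<le> spec_norm A"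
    using pos by (simp add: vnorm_smult norm_divide)
  thus ?thesis using pos by (simp add: divide_le_eq ac_simps)
qed

lemma spec_norm_le:
  assumes "c \<ge> 0" and "\<And>x. x \<in> carrier_vec (dim_col A) \<Longrightarrow> vnorm (A *\<^sub>v x) \<le> c * vnorm x"
  shows "spec_norm A \<le> c"
  unfolding spec_norm_def
proof (rule cSup_least)
  show "{vnorm (A *\<^sub>v x) | x. x \<in> carrier_vec (dim_col A) \<and> vnorm x \<le> 1} \<noteq> {}"
    by (intro ex_in_conv[THEN iffD1] exI CollectI exI[of _ "0\<^sub>v (dim_col A)"]) auto
next
  fix r assume "r \<in> {vnorm (A *\<^sub>v x) | x. x \<in> carrier_vec (dim_col A) \<and> vnorm x \<le> 1}"
  then obtain x where x: "x \<in> carrier_vec (dim_col A)" "vnorm x \<le> 1" and r: "r = vnorm (A *\<^sub>v x)"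
    by auto
  have "r \<le> c * vnorm x" using assms(2)[OF x(1)] r by simp
  also have "\<dots> \<le> c" using mult_left_mono[OF x(2) assms(1)] by simp
  finally show "r \<le> c" .
qed

section \<open>Partial isometries\<close>

lemma power2_le_mult_imp_le: assumes "(a::real)\<^sup>2 \<le> a * b" "0 \<le> a" "0 \<le> b" shows "a \<le> b"
  using assms by (cases "a = 0") (auto simp: power2_eq_square)

text \<open>With \<open>w = Px\<close> and \<open>z = P\<^sup>*w\<close>: \<open>z\<close> is orthogonal to the null space, so \<open>\<parallel>Pz\<parallel> = \<parallel>z\<parallel>\<close>;
  then \<open>\<parallel>z\<parallel>\<^sup>2 = \<langle>Pz, w\<rangle> \<le> \<parallel>z\<parallel> \<parallel>w\<parallel>\<close> and \<open>\<parallel>w\<parallel>\<^sup>2 = \<langle>x, z\<rangle> \<le> \<parallel>x\<parallel> \<parallel>z\<parallel>\<close>.\<close>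
lemma partial_isometry_vnorm_le:
  assumes P: "partial_isometry P" and x: "x \<in> carrier_vec (dim_col P)"
  shows "vnorm (P *\<^sub>v x) \<le> vnorm x"
proof -
  define m n where "m = dim_row P" and "n = dim_col P"
  have Pc: "P \<in> carrier_mat m n" unfolding m_def n_def by auto
  define w where "w = P *\<^sub>v x"
  have w: "w \<in> carrier_vec m" unfolding w_def m_def by (intro carrier_vecI) simp
  define z where "z = adjoint_mat P *\<^sub>v w"
  have z: "z \<in> carrier_vec n" unfolding z_def using adjoint_mat_carrier[OF Pc] w by auto
  have "cinner z y = 0" if y: "y \<in> carrier_vec n" "P *\<^sub>v y = 0\<^sub>v m" for y
  proof -
    have "cinner z y = cnj (cinner y z)" by (rule cinner_cnj_commute) (use y z in auto)
    also have "cinner y z = cinner (P *\<^sub>v y) w"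
      unfolding z_def by (rule cinner_mult_mat_vec_left[OF Pc y(1) w, symmetric])
    finally show ?thesis using y(2) by simp
  qed
  hence Pz: "vnorm (P *\<^sub>v z) = vnorm z"
    using P z unfolding partial_isometry_def m_def n_def by auto
  have "(vnorm z)\<^sup>2 = cmod (cinner z z)" by (simp add: cmod_cinner_self)
  also have "cinner z z = cnj (cinner (P *\<^sub>v z) w)"
    using cinner_mult_mat_vec_left[OF Pc z w] cinner_cnj_commute[of z z] z unfolding z_def by simp
  also have "cmod (cnj (cinner (P *\<^sub>v z) w)) \<le> vnorm (P *\<^sub>v z) * vnorm w"
    using cinner_Cauchy_Schwarz[of w "P *\<^sub>v z"] Pc z w by simp
  finally have zw: "vnorm z \<le> vnorm w"
    unfolding Pz by (rule power2_le_mult_imp_le) (auto simp: vnorm_nonneg)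
  have "(vnorm w)\<^sup>2 = cmod (cinner w w)" by (simp add: cmod_cinner_self)
  also have "cinner w w = cinner x z"
    unfolding w_def z_def by (rule cinner_mult_mat_vec_left[OF Pc x[folded n_def] w[unfolded w_def]])
  also have "cmod (cinner x z) \<le> vnorm x * vnorm z"
    by (rule cinner_Cauchy_Schwarz) (use x z n_def in auto)
  also have "\<dots> \<le> vnorm x * vnorm w" by (intro mult_left_mono zw vnorm_nonneg)
  finally have "(vnorm w)\<^sup>2 \<le> vnorm w * vnorm x" by (simp add: mult.commute)
  hence "vnorm w \<le> vnorm x" by (rule power2_le_mult_imp_le) (auto simp: vnorm_nonneg)
  thus ?thesis unfolding w_def .
qed

lemma partial_isometry_zero_mat: "partial_isometry (0\<^sub>m m k)"
  unfolding partial_isometry_def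
proof (intro ballI impI)
  fix x assume "x \<in> carrier_vec (dim_col (0\<^sub>m m k :: complex mat))"
    and perp: "\<forall>y\<in>carrier_vec (dim_col (0\<^sub>m m k :: complex mat)).
      0\<^sub>m m k *\<^sub>v y = 0\<^sub>v (dim_row (0\<^sub>m m k :: complex mat)) \<longrightarrow> cinner x y = 0"
  hence x: "x \<in> carrier_vec k" and Px: "0\<^sub>m m k *\<^sub>v x = 0\<^sub>v m" by (auto simp: zero_mat_mult_vec)
  have "cinner x x = 0" using perp x Px by auto
  hence "vnorm x = 0" unfolding cinner_self_eq by simp
  thus "vnorm (0\<^sub>m m k *\<^sub>v x) = vnorm x" using Px by simp
qed

lemma partial_isometry_smult: assumes P: "partial_isometry P" and c: "cmod c = 1"
  shows "partial_isometry (c \<cdot>\<^sub>m P)"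
  unfolding partial_isometry_def
proof (intro ballI impI)
  have Pc: "P \<in> carrier_mat (dim_row P) (dim_col P)" by auto
  fix x assume x: "x \<in> carrier_vec (dim_col (c \<cdot>\<^sub>m P))"
    and perp: "\<forall>y\<in>carrier_vec (dim_col (c \<cdot>\<^sub>m P)).
      c \<cdot>\<^sub>m P *\<^sub>v y = 0\<^sub>v (dim_row (c \<cdot>\<^sub>m P)) \<longrightarrow> cinner x y = 0"
  have "\<forall>y\<in>carrier_vec (dim_col P). P *\<^sub>v y = 0\<^sub>v (dim_row P) \<longrightarrow> cinner x y = 0"
  proof (intro ballI impI)
    fix y assume y: "y \<in> carrier_vec (dim_col P)" "P *\<^sub>v y = 0\<^sub>v (dim_row P)"
    have "c \<cdot>\<^sub>m P *\<^sub>v y = 0\<^sub>v (dim_row P)" using smult_mat_mult_vec[OF Pc y(1)] y(2) by auto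
    thus "cinner x y = 0" using perp y by auto
  qed
  hence "vnorm (P *\<^sub>v x) = vnorm x" using P x unfolding partial_isometry_def by auto
  thus "vnorm (c \<cdot>\<^sub>m P *\<^sub>v x) = vnorm x"
    using smult_mat_mult_vec[OF Pc, of x c] x by (auto simp: vnorm_smult c)
qed

definition outer_mat :: "complex vec \<Rightarrow> complex vec \<Rightarrow> complex mat" where
  "outer_mat u v = mat (dim_vec u) (dim_vec v) (\<lambda>(i,j). u $ i * cnj (v $ j))"

lemma outer_mat_carrier: "u \<in> carrier_vec m \<Longrightarrow> v \<in> carrier_vec k \<Longrightarrow> outer_mat u v \<in> carrier_mat m k"
  unfolding outer_mat_def by auto

lemma outer_mat_mult_vec: assumes "u \<in> carrier_vec m" "v \<in> carrier_vec k" "x \<in> carrier_vec k"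
  shows "outer_mat u v *\<^sub>v x = cinner x v \<cdot>\<^sub>v u"
  using assms unfolding outer_mat_def cinner_def
  by (intro eq_vecI) (auto simp: scalar_prod_def sum_distrib_left atLeast0LessThan ac_simps)

text \<open>For \<open>x\<close> orthogonal to the null space \<open>v\<^sup>\<bottom>\<close> of \<open>uv\<^sup>*\<close>, the vector
  \<open>x - \<langle>x,v\<rangle>v \<in> v\<^sup>\<bottom>\<close> is orthogonal to \<open>x\<close>, whence \<open>\<parallel>x\<parallel> = |\<langle>x,v\<rangle>|\<close>.\<close>
lemma partial_isometry_outer_mat:
  assumes u: "u \<in> carrier_vec m" "vnorm u = 1" and v: "v \<in> carrier_vec k" "vnorm v = 1"
  shows "partial_isometry (outer_mat u v)"
  unfolding partial_isometry_def
proof (intro ballI impI)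
  have oc: "outer_mat u v \<in> carrier_mat m k" by (rule outer_mat_carrier[OF u(1) v(1)])
  fix x assume x: "x \<in> carrier_vec (dim_col (outer_mat u v))"
    and perp: "\<forall>y\<in>carrier_vec (dim_col (outer_mat u v)).
      outer_mat u v *\<^sub>v y = 0\<^sub>v (dim_row (outer_mat u v)) \<longrightarrow> cinner x y = 0"
  have xk: "x \<in> carrier_vec k" using x oc by auto
  define c where "c = cinner x v"
  define r where "r = x - c \<cdot>\<^sub>v v"
  have r: "r \<in> carrier_vec k" unfolding r_def using xk v by auto
  have "cinner v v = 1" using cinner_self_eq[of v] v by simp
  hence "cinner r v = 0" unfolding r_def c_def
    by (subst cinner_minus_left) (use xk v in \<open>auto simp: cinner_smult_left\<close>)
  hence "outer_mat u v *\<^sub>v r = 0\<^sub>v m"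
    unfolding outer_mat_mult_vec[OF u(1) v(1) r] using u(1) by (intro eq_vecI) auto
  hence "cinner x r = 0" using perp r oc by auto
  moreover have "cinner x r = cinner x x - cnj c * c"
    unfolding r_def using xk v by (subst cinner_minus_right) (auto simp: cinner_smult_right c_def)
  ultimately have "cinner x x = cnj c * c" by simp
  also have "cnj c * c = complex_of_real ((cmod c)\<^sup>2)"
    by (subst complex_norm_square) (simp add: mult.commute)
  finally have "complex_of_real ((vnorm x)\<^sup>2) = complex_of_real ((cmod c)\<^sup>2)"
    unfolding cinner_self_eq .
  hence "vnorm x = cmod c"
    using vnorm_nonneg[of x] by (simp only: of_real_eq_iff) (simp add: power2_eq_iff_nonneg)
  thus "vnorm (outer_mat u v *\<^sub>v x) = vnorm x"
    unfolding outer_mat_mult_vec[OF u(1) v(1) xk] vnorm_smult c_def u(2) by simp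
qed

lemma scaled_partial_isometry_agrees:
  assumes D: "D \<in> carrier_mat r c" and y: "y \<in> carrier_vec c" and contr: "vnorm (D *\<^sub>v y) \<le> vnorm y"
  obtains P a where "P \<in> carrier_mat r c" "partial_isometry P" "cmod a \<le> 1" "(a \<cdot>\<^sub>m P) *\<^sub>v y = D *\<^sub>v y"
proof (cases "D *\<^sub>v y = 0\<^sub>v r")
  case True
  thus ?thesis
    using that[of "0\<^sub>m r c" 0] y partial_isometry_zero_mat by (auto simp: zero_mat_mult_vec)
next
  case False
  define x where "x = D *\<^sub>v y"
  have x: "x \<in> carrier_vec r" unfolding x_def using D y by auto
  have nx: "vnorm x > 0" using False vnorm_pos[OF x] unfolding x_def by simp
  hence ny: "vnorm y > 0" using contr unfolding x_def by simp
  define u where "u = (1 / vnorm x) \<cdot>\<^sub>v x"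
  define v where "v = (1 / vnorm y) \<cdot>\<^sub>v y"
  have u: "u \<in> carrier_vec r" "vnorm u = 1"
    unfolding u_def using x nx by (auto simp: vnorm_smult norm_divide)
  have v: "v \<in> carrier_vec c" "vnorm v = 1"
    unfolding v_def using y ny by (auto simp: vnorm_smult norm_divide)
  define a where "a = complex_of_real (vnorm x / vnorm y)"
  have "cmod a = vnorm x / vnorm y" unfolding a_def norm_of_real using nx ny by simp
  hence a: "cmod a \<le> 1" using contr ny by (simp add: x_def)
  have "cinner y v = complex_of_real (vnorm y)"
    unfolding v_def using ny by (simp add: cinner_smult_right cinner_self_eq power2_eq_square)
  hence "outer_mat u v *\<^sub>v y = complex_of_real (vnorm y / vnorm x) \<cdot>\<^sub>v x"
    unfolding outer_mat_mult_vec[OF u(1) v(1) y] by (simp add: u_def smult_smult_assoc)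
  hence "(a \<cdot>\<^sub>m outer_mat u v) *\<^sub>v y = (a * complex_of_real (vnorm y / vnorm x)) \<cdot>\<^sub>v x"
    using smult_mat_mult_vec[OF outer_mat_carrier[OF u(1) v(1)] y, of a] by (simp add: smult_smult_assoc)
  also have "a * complex_of_real (vnorm y / vnorm x) = 1"
  proof -
    have "vnorm x / vnorm y * (vnorm y / vnorm x) = 1" using nx ny by simp
    thus ?thesis unfolding a_def of_real_mult[symmetric] by simp
  qed
  finally have "(a \<cdot>\<^sub>m outer_mat u v) *\<^sub>v y = x" by simp
  thus ?thesis
    using that outer_mat_carrier[OF u(1) v(1)] partial_isometry_outer_mat[OF u v] a
    unfolding x_def by blast
qed

section \<open>Block-diagonal matrices\<close>

definition block_shapes :: "complex mat list \<Rightarrow> nat list \<Rightarrow> nat list \<Rightarrow> bool" where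
  "block_shapes Ds ps ks \<longleftrightarrow> length Ds = length ps \<and> length ks = length ps \<and>
     (\<forall>i<length ps. Ds ! i \<in> carrier_mat (ps ! i) (ks ! i))"

lemma block_shapes_Nil [simp]: "block_shapes Ds [] ks \<longleftrightarrow> Ds = [] \<and> ks = []"
  unfolding block_shapes_def by auto

lemma block_shapes_Cons [simp]:
  "block_shapes (D # Ds) (p # ps) (k # ks) \<longleftrightarrow> D \<in> carrier_mat p k \<and> block_shapes Ds ps ks"
  unfolding block_shapes_def by (auto simp: nth_Cons less_Suc_eq_0_disj split: nat.splits)

lemma block_shapes_ConsE:
  assumes "block_shapes (D # Ds) ps ks"
  obtains p ps' k ks' where "ps = p # ps'" "ks = k # ks'" "D \<in> carrier_mat p k" "block_shapes Ds ps' ks'"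
proof -
  from assms obtain p ps' where ps: "ps = p # ps'" unfolding block_shapes_def by (cases ps) auto
  from assms ps obtain k ks' where ks: "ks = k # ks'" unfolding block_shapes_def by (cases ks) auto
  show ?thesis using that[OF ps ks] assms ps ks by auto
qed

lemma struct_set_iff: "length ps = length ks \<Longrightarrow>
  \<Delta> \<in> struct_set ps ks \<longleftrightarrow> (\<exists>Ds. \<Delta> = diag_block_mat Ds \<and> block_shapes Ds ps ks)"
  unfolding struct_set_def block_shapes_def by auto

lemma piso_set_iff: "length ps = length ks \<Longrightarrow>
  P \<in> piso_set ps ks \<longleftrightarrow> (\<exists>Ps. P = diag_block_mat Ps \<and> block_shapes Ps ps ks \<and>
     (\<forall>i<length ps. partial_isometry (Ps ! i)))"
  unfolding piso_set_def block_shapes_def by auto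

lemma diag_block_mat_carrier:
  "block_shapes Ds ps ks \<Longrightarrow> diag_block_mat Ds \<in> carrier_mat (sum_list ps) (sum_list ks)"
proof (induct Ds arbitrary: ps ks)
  case (Cons D Ds)
  then show ?case by (auto elim!: block_shapes_ConsE simp: Let_def)
qed (auto simp: block_shapes_def)

lemma struct_set_carrier: "length ps = length ks \<Longrightarrow> \<Delta> \<in> struct_set ps ks \<Longrightarrow>
  \<Delta> \<in> carrier_mat (sum_list ps) (sum_list ks)"
  using diag_block_mat_carrier by (auto simp: struct_set_iff)

lemma piso_set_carrier: "length ps = length ks \<Longrightarrow> P \<in> piso_set ps ks \<Longrightarrow>
  P \<in> carrier_mat (sum_list ps) (sum_list ks)"
  using diag_block_mat_carrier by (auto simp: piso_set_iff)

lemma piso_set_nonempty: "length ps = length ks \<Longrightarrow> piso_set ps ks \<noteq> {}"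
  unfolding piso_set_def
  by (intro ex_in_conv[THEN iffD1] exI CollectI exI[of _ "map (\<lambda>(p,k). 0\<^sub>m p k) (zip ps ks)"])
    (auto simp: partial_isometry_zero_mat)

lemma diag_block_mat_Cons_mult_vec:
  assumes D: "D \<in> carrier_mat r c" and R: "diag_block_mat Ds \<in> carrier_mat r' c'"
    and a: "a \<in> carrier_vec c" and d: "d \<in> carrier_vec c'"
  shows "diag_block_mat (D # Ds) *\<^sub>v (a @\<^sub>v d) = (D *\<^sub>v a) @\<^sub>v (diag_block_mat Ds *\<^sub>v d)"
proof -
  have "diag_block_mat (D # Ds) = four_block_mat D (0\<^sub>m r c') (0\<^sub>m r' c) (diag_block_mat Ds)"
    using D R by (simp add: Let_def)
  also have "\<dots> *\<^sub>v (a @\<^sub>v d) = (D *\<^sub>v a + 0\<^sub>m r c' *\<^sub>v d) @\<^sub>v (0\<^sub>m r' c *\<^sub>v a + diag_block_mat Ds *\<^sub>v d)"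
    by (rule four_block_mat_mult_vec[OF D _ _ R a d]) auto
  finally show ?thesis using D R a d by (simp add: zero_mat_mult_vec)
qed

lemma diag_block_mat_contraction:
  assumes "block_shapes Ds ps ks"
    and "\<And>i x. i < length ps \<Longrightarrow> x \<in> carrier_vec (ks ! i) \<Longrightarrow> vnorm ((Ds ! i) *\<^sub>v x) \<le> vnorm x"
    and "x \<in> carrier_vec (sum_list ks)"
  shows "vnorm (diag_block_mat Ds *\<^sub>v x) \<le> vnorm x"
  using assms
proof (induct Ds arbitrary: ps ks x)
  case Nil thus ?case using zero_mat_mult_vec[of x 0 0] vnorm_nonneg[of x] by (auto simp: block_shapes_def vnorm_def)
next
  case (Cons D Ds)
  from Cons(2) obtain p ps' k ks' where
    *: "ps = p # ps'" "ks = k # ks'" "D \<in> carrier_mat p k" "block_shapes Ds ps' ks'"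
    by (rule block_shapes_ConsE)
  have x: "x \<in> carrier_vec (k + sum_list ks')" using Cons(4) * by simp
  define a d where "a = vec_first x k" and "d = vec_last x (sum_list ks')"
  have xad: "x = a @\<^sub>v d" unfolding a_def d_def using x by simp
  have a: "a \<in> carrier_vec k" and d: "d \<in> carrier_vec (sum_list ks')" unfolding a_def d_def by auto
  have "vnorm (diag_block_mat Ds *\<^sub>v d) \<le> vnorm d"
    by (rule Cons(1)[OF *(4) _ d]) (use Cons(3)[of "Suc _"] * in simp)
  moreover have "vnorm (D *\<^sub>v a) \<le> vnorm a" using Cons(3)[of 0 a] a * by simp
  ultimately show ?case
    unfolding xad diag_block_mat_Cons_mult_vec[OF *(3) diag_block_mat_carrier[OF *(4)] a d]
    by (rule vnorm_append_mono[rotated])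
qed

lemma diag_block_mat_map_smult:
  "block_shapes Ds ps ks \<Longrightarrow> diag_block_mat (map (\<lambda>D. c \<cdot>\<^sub>m D) Ds) = c \<cdot>\<^sub>m diag_block_mat Ds"
proof (induct Ds arbitrary: ps ks)
  case Nil thus ?case by (auto intro!: eq_matI)
next
  case (Cons D Ds)
  from Cons(2) obtain p ps' k ks' where
    *: "ps = p # ps'" "ks = k # ks'" "D \<in> carrier_mat p k" "block_shapes Ds ps' ks'"
    by (rule block_shapes_ConsE)
  have "c \<cdot>\<^sub>m (0\<^sub>m r k :: complex mat) = 0\<^sub>m r k" for r k by (intro eq_matI) auto
  thus ?case
    using diag_block_mat_carrier[OF *(4)] *(3) Cons(1)[OF *(4)]
    by (simp add: Let_def smult_four_block_mat[of D p k _ "sum_list ks'" _ "sum_list ps'"])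
qed

lemma diag_block_mat_Cons_contraction:
  assumes D: "D \<in> carrier_mat p k" and R: "diag_block_mat Ds \<in> carrier_mat p' k'"
    and contr: "\<And>v. v \<in> carrier_vec (k + k') \<Longrightarrow> vnorm (diag_block_mat (D # Ds) *\<^sub>v v) \<le> vnorm v"
  shows "a \<in> carrier_vec k \<Longrightarrow> vnorm (D *\<^sub>v a) \<le> vnorm a"
    and "d \<in> carrier_vec k' \<Longrightarrow> vnorm (diag_block_mat Ds *\<^sub>v d) \<le> vnorm d"
proof -
  assume a: "a \<in> carrier_vec k"
  have "vnorm (D *\<^sub>v a) = vnorm (diag_block_mat (D # Ds) *\<^sub>v (a @\<^sub>v 0\<^sub>v k'))"
    using diag_block_mat_Cons_mult_vec[OF D R a zero_carrier_vec[of k']] R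
    by (simp add: mult_mat_vec_zero_vec)
  also have "\<dots> \<le> vnorm a" using contr[of "a @\<^sub>v 0\<^sub>v k'"] a by simp
  finally show "vnorm (D *\<^sub>v a) \<le> vnorm a" .
next
  assume d: "d \<in> carrier_vec k'"
  have "vnorm (diag_block_mat Ds *\<^sub>v d) = vnorm (diag_block_mat (D # Ds) *\<^sub>v (0\<^sub>v k @\<^sub>v d))"
    using diag_block_mat_Cons_mult_vec[OF D R zero_carrier_vec[of k] d] D
    by (simp add: mult_mat_vec_zero_vec)
  also have "\<dots> \<le> vnorm d" using contr[of "0\<^sub>v k @\<^sub>v d"] d by simp
  finally show "vnorm (diag_block_mat Ds *\<^sub>v d) \<le> vnorm d" .
qed

definition scale_blocks :: "complex list \<Rightarrow> complex mat list \<Rightarrow> complex mat list" where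
  "scale_blocks cs Ps = map (\<lambda>(c,P). c \<cdot>\<^sub>m P) (zip cs Ps)"

lemma scale_blocks_Cons [simp]: "scale_blocks (c # cs) (P # Ps) = (c \<cdot>\<^sub>m P) # scale_blocks cs Ps"
  unfolding scale_blocks_def by simp

lemma scale_blocks_Nil [simp]: "scale_blocks [] Ps = []" "scale_blocks cs [] = []"
  unfolding scale_blocks_def by auto

lemma block_shapes_scale_blocks:
  "block_shapes Ps ps ks \<Longrightarrow> length cs = length ps \<Longrightarrow> block_shapes (scale_blocks cs Ps) ps ks"
  unfolding block_shapes_def scale_blocks_def by auto

lemma diag_scale_blocks_in_piso_set:
  assumes "block_shapes Ps ps ks" "\<forall>i<length ps. partial_isometry (Ps ! i)"
    and "length cs = length ps" "\<forall>i<length ps. cmod (cs ! i) = 1"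
  shows "diag_block_mat (scale_blocks cs Ps) \<in> piso_set ps ks"
proof -
  have len: "length ps = length ks" using assms(1) unfolding block_shapes_def by simp
  have "partial_isometry (scale_blocks cs Ps ! i)" if "i < length ps" for i
    using assms that by (auto simp: scale_blocks_def block_shapes_def intro!: partial_isometry_smult)
  thus ?thesis
    unfolding piso_set_iff[OF len] using block_shapes_scale_blocks[OF assms(1,3)] by blast
qed

lemma diag_contraction_agrees_scaled_piso:
  assumes "block_shapes Ds ps ks"
    and "\<And>v. v \<in> carrier_vec (sum_list ks) \<Longrightarrow> vnorm (diag_block_mat Ds *\<^sub>v v) \<le> vnorm v"
    and "y \<in> carrier_vec (sum_list ks)"
  obtains Ps cs where "block_shapes Ps ps ks" "\<forall>i<length ps. partial_isometry (Ps ! i)"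
    "length cs = length ps" "\<forall>i<length ps. cmod (cs ! i) \<le> 1"
    "diag_block_mat (scale_blocks cs Ps) *\<^sub>v y = diag_block_mat Ds *\<^sub>v y"
  using assms
proof (induct Ds arbitrary: ps ks y thesis)
  case Nil
  hence "ps = []" "ks = []" by (auto simp: block_shapes_def)
  thus ?case using Nil(1)[of "[]" "[]"] by (auto intro: eq_vecI)
next
  case (Cons D Ds)
  from Cons(3) obtain p ps' k ks' where
    *: "ps = p # ps'" "ks = k # ks'" "D \<in> carrier_mat p k" "block_shapes Ds ps' ks'"
    by (rule block_shapes_ConsE)
  note R = diag_block_mat_carrier[OF *(4)]
  note contr = diag_block_mat_Cons_contraction[OF *(3) R]
  have y: "y \<in> carrier_vec (k + sum_list ks')" using Cons(5) * by simp
  define a d where "a = vec_first y k" and "d = vec_last y (sum_list ks')"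
  have yad: "y = a @\<^sub>v d" unfolding a_def d_def using y by simp
  have a: "a \<in> carrier_vec k" and d: "d \<in> carrier_vec (sum_list ks')" unfolding a_def d_def by auto
  obtain P c where P: "P \<in> carrier_mat p k" "partial_isometry P" "cmod c \<le> 1"
    "(c \<cdot>\<^sub>m P) *\<^sub>v a = D *\<^sub>v a"
    by (rule scaled_partial_isometry_agrees[OF *(3) a contr(1)[OF _ a]]) (use Cons(4) * in simp)
  obtain Ps cs where IH: "block_shapes Ps ps' ks'" "\<forall>i<length ps'. partial_isometry (Ps ! i)"
    "length cs = length ps'" "\<forall>i<length ps'. cmod (cs ! i) \<le> 1"
    "diag_block_mat (scale_blocks cs Ps) *\<^sub>v d = diag_block_mat Ds *\<^sub>v d"
    by (rule Cons(1)[OF _ *(4) contr(2) d]) (use Cons(4) * in simp_all)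
  have "diag_block_mat (scale_blocks (c # cs) (P # Ps)) *\<^sub>v y = diag_block_mat (D # Ds) *\<^sub>v y"
    unfolding yad scale_blocks_Cons
    using diag_block_mat_Cons_mult_vec[OF _ diag_block_mat_carrier[OF block_shapes_scale_blocks[OF IH(1,3)]] a d]
      diag_block_mat_Cons_mult_vec[OF *(3) R a d] P(1,4) IH(5) by simp
  moreover have "\<forall>i<length ps. partial_isometry ((P # Ps) ! i)" "\<forall>i<length ps. cmod ((c # cs) ! i) \<le> 1"
    using * P(2,3) IH(2,4) by (auto simp: nth_Cons split: nat.splits)
  ultimately show ?case using Cons(2)[of "P # Ps" "c # cs"] * P(1) IH(1,3) by simp
qed

section \<open>Eigenvalues of affine matrix pencils on the unit circle\<close>

lemma uniform_limit_continuous_on_Times: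
  fixes H :: "'a::metric_space \<times> 'b::metric_space \<Rightarrow> 'c::metric_space"
  assumes H: "continuous_on (T \<times> K) H" and T: "compact T" and K: "compact K"
    and s: "\<And>k. s k \<in> T" "s \<longlonglongrightarrow> t" and t: "t \<in> T"
  shows "uniform_limit K (\<lambda>k z. H (s k, z)) (\<lambda>z. H (t, z)) sequentially"
  unfolding uniform_limit_iff
proof (intro allI impI)
  fix \<epsilon> :: real assume "\<epsilon> > 0"
  have uc: "uniformly_continuous_on (T \<times> K) H"
    by (rule compact_uniformly_continuous[OF H compact_Times[OF T K]])
  obtain d where "d > 0" and d: "\<And>x x'. x \<in> T \<times> K \<Longrightarrow> x' \<in> T \<times> K \<Longrightarrow>
      dist x' x < d \<Longrightarrow> dist (H x') (H x) < \<epsilon>"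
    using uniformly_continuous_onE[OF uc \<open>\<epsilon> > 0\<close>] by blast
  have "\<forall>\<^sub>F k in sequentially. dist (s k) t < d" by (rule tendstoD[OF s(2) \<open>d > 0\<close>])
  then show "\<forall>\<^sub>F k in sequentially. \<forall>z\<in>K. dist (H (s k, z)) (H (t, z)) < \<epsilon>"
  proof eventually_elim
    case (elim k)
    show ?case
    proof
      fix z assume "z \<in> K"
      then show "dist (H (s k, z)) (H (t, z)) < \<epsilon>"
        using d[of "(t, z)" "(s k, z)"] s(1)[of k] t elim by (simp add: dist_Pair_Pair)
    qed
  qed
qed

lemma first_zero_time:
  fixes H :: "real \<times> complex \<Rightarrow> complex"
  assumes H: "continuous_on ({0..1} \<times> cball 0 1) H" and z: "H (1, z) = 0" "cmod z \<le> 1"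
  obtains t0 z0 where "t0 \<in> {0..1}" "cmod z0 \<le> 1" "H (t0, z0) = 0"
    "\<And>t w. 0 \<le> t \<Longrightarrow> t < t0 \<Longrightarrow> cmod w \<le> 1 \<Longrightarrow> H (t, w) \<noteq> 0"
proof -
  define K where "K = {q \<in> {0..1} \<times> cball 0 1. H q = 0}"
  have "closed K"
    unfolding K_def by (rule continuous_closed_preimage_constant[OF H]) (intro closed_Times closed_atLeastAtMost closed_cball)
  moreover have "K \<subseteq> {0..1} \<times> cball 0 1" unfolding K_def by blast
  ultimately have "compact K"
    using compact_Int_closed[OF compact_Times[OF compact_Icc compact_cball]] by (metis Int_absorb1)
  then have "compact (fst ` K)" by (rule compact_continuous_image[OF continuous_on_fst[OF continuous_on_id]])
  moreover have "(1, z) \<in> K" unfolding K_def using z by simp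
  ultimately obtain t0 where "t0 \<in> fst ` K" and t0_min: "\<And>t. t \<in> fst ` K \<Longrightarrow> t0 \<le> t"
    using compact_attains_inf[of "fst ` K"] by blast
  then obtain z0 where "(t0, z0) \<in> K" by force
  moreover have "H (t, w) \<noteq> 0" if "0 \<le> t" "t < t0" "cmod w \<le> 1" for t w
  proof
    assume "H (t, w) = 0"
    with that \<open>(t0, z0) \<in> K\<close> have "t \<in> fst ` K" unfolding K_def by force
    then show False using t0_min \<open>t < t0\<close> by force
  qed
  ultimately show ?thesis using that unfolding K_def by auto
qed

text \<open>At the first time \<open>t\<^sub>0\<close> at which a zero \<open>z\<^sub>0\<close> appears, \<open>H(t\<^sub>0,\<cdot>)\<close> is the locally uniform
  limit of the zero-free functions \<open>H(t,\<cdot>)\<close>, \<open>t \<nearrow> t\<^sub>0\<close>; Hurwitz's theorem forbids its zero.\<close>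
lemma homotopy_zero_free_on_cball:
  fixes H :: "real \<times> complex \<Rightarrow> complex"
  assumes H: "continuous_on ({0..1} \<times> cball 0 1) H"
    and holo: "\<And>t. t \<in> {0..1} \<Longrightarrow> (\<lambda>z. H (t, z)) holomorphic_on ball 0 1"
    and start: "\<And>z. cmod z \<le> 1 \<Longrightarrow> H (0, z) \<noteq> 0"
    and boundary: "\<And>t z. t \<in> {0..1} \<Longrightarrow> cmod z = 1 \<Longrightarrow> H (t, z) \<noteq> 0"
    and z: "cmod z \<le> 1"
  shows "H (1, z) \<noteq> 0"
proof
  assume "H (1, z) = 0"
  obtain t0 z0 where t0: "t0 \<in> {0..1}" and z0: "cmod z0 \<le> 1" and H0: "H (t0, z0) = 0"
    and before: "\<And>t w. 0 \<le> t \<Longrightarrow> t < t0 \<Longrightarrow> cmod w \<le> 1 \<Longrightarrow> H (t, w) \<noteq> 0"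
    using first_zero_time[OF H \<open>H (1, z) = 0\<close> z] by blast
  have "t0 > 0" using start[OF z0] H0 t0 by (cases "t0 = 0") auto
  have "cmod z0 \<noteq> 1" using boundary[OF t0] H0 by auto
  with z0 have z0_ball: "z0 \<in> ball 0 1" by simp
  define s where "s k = t0 * (1 - inverse (real (Suc k)))" for k
  have s_lt: "s k < t0" and s_nonneg: "0 \<le> s k" for k
    using \<open>t0 > 0\<close> unfolding s_def by (auto simp: field_simps)
  have s_01: "s k \<in> {0..1}" for k using s_lt[of k] s_nonneg[of k] t0 by simp
  have "s \<longlonglongrightarrow> t0 * (1 - 0)"
    unfolding s_def by (intro tendsto_intros LIMSEQ_inverse_real_of_nat)
  then have s_lim: "s \<longlonglongrightarrow> t0" by simp
  have "\<not> (\<lambda>w. H (t0, w)) constant_on ball 0 1"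
  proof
    assume "(\<lambda>w. H (t0, w)) constant_on ball 0 1"
    then have zero: "\<And>w. w \<in> ball 0 1 \<Longrightarrow> H (t0, w) = 0"
      using H0 z0_ball unfolding constant_on_def by metis
    have "continuous_on (cball 0 1) (\<lambda>w. H (t0, w))"
      by (rule continuous_on_compose2[OF H continuous_on_Pair[OF continuous_on_const continuous_on_id]])
        (use t0 in \<open>simp add: image_subset_iff\<close>)
    then have "H (t0, 1) = 0"
      by (intro continuous_constant_on_closure[where S="ball 0 1" and f="\<lambda>w. H (t0, w)", OF _ zero])
        simp_all
    then show False using boundary[OF t0, of 1] by simp
  qed
  then have "H (t0, z0) \<noteq> 0"
  proof (rule Hurwitz_no_zeros[of "ball 0 1" "\<lambda>k w. H (s k, w)" "\<lambda>w. H (t0, w)", rotated 5])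
    show "uniform_limit L (\<lambda>k w. H (s k, w)) (\<lambda>w. H (t0, w)) sequentially"
      if "compact L" "L \<subseteq> ball 0 1" for L
      by (rule uniform_limit_continuous_on_Times[OF continuous_on_subset[OF H] compact_Icc that(1) s_01 s_lim t0])
        (use that in auto)
    show "\<And>k. (\<lambda>w. H (s k, w)) holomorphic_on ball 0 1" using holo s_01 by blast
    show "(\<lambda>w. H (t0, w)) holomorphic_on ball 0 1" using holo t0 by blast
    show "\<And>k w. w \<in> ball 0 1 \<Longrightarrow> H (s k, w) \<noteq> 0" using before s_nonneg s_lt by simp
  qed (use z0_ball in auto)
  then show False using H0 by simp
qed

definition affine_mat_fun :: "(complex \<Rightarrow> complex mat) \<Rightarrow> nat \<Rightarrow> nat \<Rightarrow> bool" where
  "affine_mat_fun F n m \<longleftrightarrow> (\<forall>z. F z \<in> carrier_mat n m) \<and>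
     (\<exists>a b. \<forall>z i j. i < n \<longrightarrow> j < m \<longrightarrow> F z $$ (i,j) = a i j + z * b i j)"

lemma affine_mat_fun_const: "A \<in> carrier_mat n m \<Longrightarrow> affine_mat_fun (\<lambda>_. A) n m"
  unfolding affine_mat_fun_def
  by (intro conjI allI exI[of _ "\<lambda>i j. A $$ (i,j)"] exI[of _ "\<lambda>i j. 0"]) auto

lemma affine_mat_fun_smult: "P \<in> carrier_mat n m \<Longrightarrow> affine_mat_fun (\<lambda>z. z \<cdot>\<^sub>m P) n m"
  unfolding affine_mat_fun_def
  by (intro conjI allI exI[of _ "\<lambda>i j. 0"] exI[of _ "\<lambda>i j. P $$ (i,j)"]) auto

lemma affine_mat_fun_diag_block_mat_Cons:
  assumes F: "affine_mat_fun F r c" and R: "affine_mat_fun (\<lambda>z. diag_block_mat (Xs z)) r' c'"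
  shows "affine_mat_fun (\<lambda>z. diag_block_mat (F z # Xs z)) (r + r') (c + c')"
proof -
  from F obtain a b where Fc: "\<And>z. F z \<in> carrier_mat r c"
    and ab: "\<And>z i j. i < r \<Longrightarrow> j < c \<Longrightarrow> F z $$ (i,j) = a i j + z * b i j"
    unfolding affine_mat_fun_def by blast
  from R obtain a' b' where Rc: "\<And>z. diag_block_mat (Xs z) \<in> carrier_mat r' c'"
    and ab': "\<And>z i j. i < r' \<Longrightarrow> j < c' \<Longrightarrow> diag_block_mat (Xs z) $$ (i,j) = a' i j + z * b' i j"
    unfolding affine_mat_fun_def by blast
  have eq: "diag_block_mat (F z # Xs z) = four_block_mat (F z) (0\<^sub>m r c') (0\<^sub>m r' c) (diag_block_mat (Xs z))" for z
    using Fc[of z] Rc[of z] by (simp add: Let_def)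
  define blocks where "blocks f g i j = (if i < r then if j < c then f i j else 0
      else if j < c then 0 else g (i - r) (j - c))" for f g :: "nat \<Rightarrow> nat \<Rightarrow> complex" and i j
  have "diag_block_mat (F z # Xs z) $$ (i, j) = blocks a a' i j + z * blocks b b' i j"
    if "i < r + r'" "j < c + c'" for z i j
    unfolding eq blocks_def using Fc[of z] Rc[of z] that by (auto simp: ab ab')
  moreover have "diag_block_mat (F z # Xs z) \<in> carrier_mat (r + r') (c + c')" for z
    unfolding eq using Fc[of z] Rc[of z] by auto
  ultimately show ?thesis
    unfolding affine_mat_fun_def by (intro conjI allI impI exI[of _ "blocks a a'"] exI[of _ "blocks b b'"]) auto
qed

lemma affine_mat_fun_diag_scale_blocks_update:
  "block_shapes Ps ps ks \<Longrightarrow> length cs = length ps \<Longrightarrow>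
    affine_mat_fun (\<lambda>z. diag_block_mat (scale_blocks (cs[j := z]) Ps)) (sum_list ps) (sum_list ks)"
proof (induct Ps arbitrary: ps ks cs j)
  case Nil
  thus ?case by (auto simp: block_shapes_def intro: affine_mat_fun_const)
next
  case (Cons P Ps)
  from Cons(2) obtain p ps' k ks' where
    *: "ps = p # ps'" "ks = k # ks'" "P \<in> carrier_mat p k" "block_shapes Ps ps' ks'"
    by (rule block_shapes_ConsE)
  from Cons(3) * obtain c cs' where cs: "cs = c # cs'" "length cs' = length ps'" by (cases cs) auto
  show ?case
  proof (cases j)
    case 0
    have "affine_mat_fun (\<lambda>z. diag_block_mat ((z \<cdot>\<^sub>m P) # scale_blocks cs' Ps)) (p + sum_list ps') (k + sum_list ks')"
      by (intro affine_mat_fun_diag_block_mat_Cons affine_mat_fun_smult[OF *(3)] affine_mat_fun_const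
          diag_block_mat_carrier block_shapes_scale_blocks[OF *(4) cs(2)])
    thus ?thesis using 0 * cs by simp
  next
    case (Suc j')
    have "affine_mat_fun (\<lambda>z. diag_block_mat ((c \<cdot>\<^sub>m P) # scale_blocks (cs'[j' := z]) Ps))
        (p + sum_list ps') (k + sum_list ks')"
      by (intro affine_mat_fun_diag_block_mat_Cons affine_mat_fun_const Cons(1)[OF *(4) cs(2)])
        (use *(3) in simp)
    thus ?thesis using Suc * cs by simp
  qed
qed

lemma affine_mat_fun_mult:
  assumes F: "affine_mat_fun F n m" and M: "M \<in> carrier_mat m q"
  shows "affine_mat_fun (\<lambda>z. F z * M) n q"
proof -
  from F obtain a b where Fc: "\<And>z. F z \<in> carrier_mat n m"
    and ab: "\<And>z i j. i < n \<Longrightarrow> j < m \<Longrightarrow> F z $$ (i,j) = a i j + z * b i j"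
    unfolding affine_mat_fun_def by blast
  have "(F z * M) $$ (i,j) = (\<Sum>l<m. a i l * M $$ (l,j)) + z * (\<Sum>l<m. b i l * M $$ (l,j))"
    if "i < n" "j < q" for z i j
  proof -
    have "(F z * M) $$ (i,j) = (\<Sum>l<m. (a i l + z * b i l) * M $$ (l,j))"
      using Fc[of z] M that ab by (simp add: scalar_prod_def atLeast0LessThan)
    thus ?thesis by (simp add: algebra_simps sum.distrib sum_distrib_left)
  qed
  moreover have "F z * M \<in> carrier_mat n q" for z using Fc[of z] M by simp
  ultimately show ?thesis
    unfolding affine_mat_fun_def
    by (intro conjI allI impI exI[of _ "\<lambda>i j. \<Sum>l<m. a i l * M $$ (l,j)"]
        exI[of _ "\<lambda>i j. \<Sum>l<m. b i l * M $$ (l,j)"]) auto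
qed

lemma det_one_minus_smult_eq_0_iff:
  fixes C :: "complex mat" assumes C: "C \<in> carrier_mat n n" and w: "w \<noteq> 0"
  shows "det (1\<^sub>m n - w \<cdot>\<^sub>m C) = 0 \<longleftrightarrow> eigenvalue C (1 / w)"
proof -
  have "(1\<^sub>m n - w \<cdot>\<^sub>m C) *\<^sub>v v = 0\<^sub>v n \<longleftrightarrow> C *\<^sub>v v = (1 / w) \<cdot>\<^sub>v v" if v: "v \<in> carrier_vec n" for v
  proof -
    have "v - w \<cdot>\<^sub>v u = 0\<^sub>v n \<longleftrightarrow> u = (1 / w) \<cdot>\<^sub>v v" if u: "u \<in> carrier_vec n" for u
    proof -
      have "v - w \<cdot>\<^sub>v u = 0\<^sub>v n \<longleftrightarrow> (\<forall>i<n. v $ i - w * u $ i = 0)"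
      proof
        assume "v - w \<cdot>\<^sub>v u = 0\<^sub>v n"
        then have "(v - w \<cdot>\<^sub>v u) $ i = 0" if "i < n" for i using that by simp
        then show "\<forall>i<n. v $ i - w * u $ i = 0" using u v by simp
      qed (use u v in \<open>auto intro!: eq_vecI\<close>)
      also have "\<dots> \<longleftrightarrow> (\<forall>i<n. u $ i = 1 / w * v $ i)"
        using w by (auto simp: field_simps)
      also have "\<dots> \<longleftrightarrow> u = (1 / w) \<cdot>\<^sub>v v"
        using u v by (auto simp: vec_eq_iff)
      finally show ?thesis .
    qed
    moreover have "(1\<^sub>m n - w \<cdot>\<^sub>m C) *\<^sub>v v = v - w \<cdot>\<^sub>v (C *\<^sub>v v)"
      using v C by (simp add: minus_mult_distrib_mat_vec[of _ n n] smult_mat_mult_vec)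
    ultimately show ?thesis using v C by simp
  qed
  moreover have "det (1\<^sub>m n - w \<cdot>\<^sub>m C) = 0 \<longleftrightarrow>
      (\<exists>v. v \<in> carrier_vec n \<and> v \<noteq> 0\<^sub>v n \<and> (1\<^sub>m n - w \<cdot>\<^sub>m C) *\<^sub>v v = 0\<^sub>v n)"
    by (rule det_0_iff_vec_prod_zero_field) (use C in auto)
  ultimately show ?thesis
    unfolding eigenvalue_def eigenvector_def using C by auto
qed

text \<open>The Leibniz expansion of \<open>det(I - w F(z))\<close> for \<open>F(z)\<close> with entries \<open>a\<^sub>i\<^sub>j + z b\<^sub>i\<^sub>j\<close>,
  exhibiting it as a polynomial in \<open>w\<close> and \<open>z\<close>.\<close>
definition pencil_det :: "nat \<Rightarrow> (nat \<Rightarrow> nat \<Rightarrow> complex) \<Rightarrow> (nat \<Rightarrow> nat \<Rightarrow> complex) \<Rightarrow>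
    complex \<Rightarrow> complex \<Rightarrow> complex" where
  "pencil_det n a b w z = (\<Sum>p\<in>{p. p permutes {0..<n}}. signof p *
      (\<Prod>i=0..<n. ((if i = p i then 1 else 0) - w * (a i (p i) + z * b i (p i)))))"

lemma det_eq_pencil_det:
  assumes F: "F \<in> carrier_mat n n"
    and ab: "\<And>i j. i < n \<Longrightarrow> j < n \<Longrightarrow> F $$ (i,j) = a i j + z * b i j"
  shows "det (1\<^sub>m n - w \<cdot>\<^sub>m F) = pencil_det n a b w z"
proof -
  have "p i < n" if "p permutes {0..<n}" "i < n" for p i
    using that permutes_in_image by fastforce
  thus ?thesis
    unfolding Determinant.det_def pencil_det_def using F
    by (auto intro!: sum.cong prod.cong simp: ab)
qed

lemma pencil_det_0: "pencil_det n a b 0 z = 1"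
proof -
  have "pencil_det n a b 0 z = pencil_det n (\<lambda>_ _. 0) (\<lambda>_ _. 0) 0 z" by (simp add: pencil_det_def)
  also have "\<dots> = det (1\<^sub>m n - 0 \<cdot>\<^sub>m (0\<^sub>m n n :: complex mat))"
    by (rule det_eq_pencil_det[symmetric]) auto
  also have "1\<^sub>m n - 0 \<cdot>\<^sub>m (0\<^sub>m n n :: complex mat) = 1\<^sub>m n" by (intro eq_matI) auto
  finally show ?thesis by simp
qed

lemma eigenvalue_on_unit_circle:
  assumes F: "affine_mat_fun F n n" and e: "cmod e \<le> 1" and eig: "eigenvalue (F e) \<kappa>"
    and \<alpha>: "0 < \<alpha>" "\<alpha> \<le> cmod \<kappa>"
  obtains \<zeta> \<mu> where "cmod \<zeta> = 1" "eigenvalue (F \<zeta>) \<mu>" "\<alpha> \<le> cmod \<mu>"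
proof (rule ccontr)
  assume "\<not> thesis"
  with that have small: "cmod \<mu> < \<alpha>" if "cmod \<zeta> = 1" "eigenvalue (F \<zeta>) \<mu>" for \<zeta> \<mu>
    using that by force
  from F obtain a b where Fc: "\<And>z. F z \<in> carrier_mat n n"
    and ab: "\<And>z i j. i < n \<Longrightarrow> j < n \<Longrightarrow> F z $$ (i,j) = a i j + z * b i j"
    unfolding affine_mat_fun_def by blast
  have "\<kappa> \<noteq> 0" using \<alpha> by auto
  define H where "H q = pencil_det n a b (of_real (fst q) * inverse \<kappa>) (snd q)" for q
  have H_eq_0: "H (t, z) = 0 \<longleftrightarrow> eigenvalue (F z) (\<kappa> / of_real t)" if "t \<noteq> 0" for t z
    using det_one_minus_smult_eq_0_iff[OF Fc[of z], of "of_real t * inverse \<kappa>"] det_eq_pencil_det[OF Fc ab]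
      \<open>\<kappa> \<noteq> 0\<close> that unfolding H_def by (simp add: field_simps)
  have "H (1, e) \<noteq> 0"
  proof (rule homotopy_zero_free_on_cball[OF _ _ _ _ e])
    show "continuous_on ({0..1} \<times> cball 0 1) H"
      unfolding H_def pencil_det_def by (intro continuous_intros)
    show "(\<lambda>z. H (t, z)) holomorphic_on ball 0 1" for t
      unfolding H_def pencil_det_def fst_conv snd_conv by (intro holomorphic_intros)
    show "H (0, z) \<noteq> 0" for z unfolding H_def by (simp add: pencil_det_0)
    show "H (t, \<zeta>) \<noteq> 0" if t: "t \<in> {0..1}" and \<zeta>: "cmod \<zeta> = 1" for t \<zeta>
    proof (cases "t = 0")
      case False
      have "\<alpha> * t \<le> cmod \<kappa>" by (rule order_trans[OF mult_left_le \<alpha>(2)]) (use t \<alpha> in auto)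
      with False t have "\<alpha> \<le> cmod (\<kappa> / of_real t)" by (simp add: norm_divide le_divide_eq)
      then show ?thesis using H_eq_0[OF False] small[OF \<zeta>] by force
    qed (simp add: H_def pencil_det_0)
  qed
  then show False using H_eq_0[of 1 e] eig by simp
qed

lemma unimodular_scalars_keep_eigenvalue:
  assumes Ps: "block_shapes Ps ps ks" and M: "M \<in> carrier_mat (sum_list ks) (sum_list ps)"
    and cs: "length cs = length ps" "\<forall>i<length ps. cmod (cs ! i) \<le> 1"
    and eig: "eigenvalue (diag_block_mat (scale_blocks cs Ps) * M) \<kappa>" and \<alpha>: "0 < \<alpha>" "\<alpha> \<le> cmod \<kappa>"
  obtains cs' \<mu> where "length cs' = length ps" "\<forall>i<length ps. cmod (cs' ! i) = 1"
    "eigenvalue (diag_block_mat (scale_blocks cs' Ps) * M) \<mu>" "\<alpha> \<le> cmod \<mu>"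
proof -
  have "\<exists>cs' \<mu>. length cs' = length ps \<and> (\<forall>i<length ps. cmod (cs' ! i) \<le> 1) \<and>
     (\<forall>i<j. cmod (cs' ! i) = 1) \<and> eigenvalue (diag_block_mat (scale_blocks cs' Ps) * M) \<mu> \<and> \<alpha> \<le> cmod \<mu>"
    if "j \<le> length ps" for j
    using that
  proof (induct j)
    case 0 thus ?case using cs eig \<alpha> by blast
  next
    case (Suc j)
    then obtain cs' \<mu> where IH: "length cs' = length ps" "\<forall>i<length ps. cmod (cs' ! i) \<le> 1"
      "\<forall>i<j. cmod (cs' ! i) = 1" "eigenvalue (diag_block_mat (scale_blocks cs' Ps) * M) \<mu>" "\<alpha> \<le> cmod \<mu>"
      by auto
    have j: "j < length ps" using Suc by simp
    define F where "F z = diag_block_mat (scale_blocks (cs'[j := z]) Ps) * M" for z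
    have F: "affine_mat_fun F (sum_list ps) (sum_list ps)" unfolding F_def
      by (rule affine_mat_fun_mult[OF affine_mat_fun_diag_scale_blocks_update[OF Ps IH(1)] M])
    have e: "cmod (cs' ! j) \<le> 1" using IH(2) j by simp
    have "eigenvalue (F (cs' ! j)) \<mu>" using IH(4) unfolding F_def by simp
    then obtain \<zeta> \<mu>' where \<zeta>: "cmod \<zeta> = 1" "eigenvalue (F \<zeta>) \<mu>'" "\<alpha> \<le> cmod \<mu>'"
      by (rule eigenvalue_on_unit_circle[OF F e _ \<alpha>(1) IH(5)])
    have "\<forall>i<length ps. cmod (cs'[j := \<zeta>] ! i) \<le> 1" "\<forall>i<Suc j. cmod (cs'[j := \<zeta>] ! i) = 1"
      using IH(1,2,3) \<zeta>(1) j by (auto simp: nth_list_update less_Suc_eq)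
    moreover have "length (cs'[j := \<zeta>]) = length ps" using IH(1) by simp
    ultimately show ?case using \<zeta>(2,3) unfolding F_def by blast
  qed
  from this[OF le_refl] obtain cs' \<mu> where "length cs' = length ps" "\<forall>i<length ps. cmod (cs' ! i) = 1"
      "eigenvalue (diag_block_mat (scale_blocks cs' Ps) * M) \<mu>" "\<alpha> \<le> cmod \<mu>"
    by blast
  with that show ?thesis .
qed

section \<open>The two inequalities\<close>

lemma spectral_radius_nonneg:
  assumes "C \<in> carrier_mat n n" "n > 0" shows "spectral_radius C \<ge> 0"
proof -
  obtain \<mu> where "spectral_radius C = cmod \<mu>" using spectral_radius_mem_max(1)[OF assms] by blast
  thus ?thesis by simp
qed

lemma eigenvalue_le_spectral_radius:
  assumes "C \<in> carrier_mat n n" "n > 0" "eigenvalue C \<mu>" shows "cmod \<mu> \<le> spectral_radius C"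
  by (rule spectral_radius_mem_max(2)[OF assms(1,2) imageI]) (simp add: spectrum_def assms(3))

lemma det_one_minus_mult_eq_0_fixed_vec:
  assumes D: "\<Delta> \<in> carrier_mat p k" and M: "M \<in> carrier_mat k p"
    and det: "det (1\<^sub>m p - \<Delta> * M) = (0::complex)"
  obtains x where "x \<in> carrier_vec p" "x \<noteq> 0\<^sub>v p" "\<Delta> *\<^sub>v (M *\<^sub>v x) = x"
proof -
  have m: "1\<^sub>m p - \<Delta> * M \<in> carrier_mat p p" using D M by auto
  from det det_0_iff_vec_prod_zero_field[OF m] obtain x where
    x: "x \<in> carrier_vec p" "x \<noteq> 0\<^sub>v p" "(1\<^sub>m p - \<Delta> * M) *\<^sub>v x = 0\<^sub>v p" by auto
  have "(1\<^sub>m p - \<Delta> * M) *\<^sub>v x = x - \<Delta> *\<^sub>v (M *\<^sub>v x)"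
    using D M x(1) by (simp add: minus_mult_distrib_mat_vec[of _ p p])
  with x(3) have "x - \<Delta> *\<^sub>v (M *\<^sub>v x) = 0\<^sub>v p" by simp
  hence "\<Delta> *\<^sub>v (M *\<^sub>v x) = x"
  proof (intro eq_vecI)
    fix i assume eq: "x - \<Delta> *\<^sub>v (M *\<^sub>v x) = 0\<^sub>v p" and i: "i < dim_vec x"
    have "(x - \<Delta> *\<^sub>v (M *\<^sub>v x)) $ i = 0\<^sub>v p $ i" using eq by simp
    thus "(\<Delta> *\<^sub>v (M *\<^sub>v x)) $ i = x $ i" using i x(1) D by simp
  qed (use D x(1) in simp)
  thus ?thesis using that x by blast
qed

lemma spec_norm_lower_bound_of_singular:
  assumes D: "\<Delta> \<in> carrier_mat p k" and M: "M \<in> carrier_mat k p"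
    and det: "det (1\<^sub>m p - \<Delta> * M) = 0"
  shows "1 \<le> spec_norm \<Delta> * frobenius_norm M"
proof -
  obtain x where x: "x \<in> carrier_vec p" "x \<noteq> 0\<^sub>v p" "\<Delta> *\<^sub>v (M *\<^sub>v x) = x"
    by (rule det_one_minus_mult_eq_0_fixed_vec[OF D M det])
  have "vnorm x = vnorm (\<Delta> *\<^sub>v (M *\<^sub>v x))" using x(3) by simp
  also have "\<dots> \<le> spec_norm \<Delta> * vnorm (M *\<^sub>v x)"
    by (rule vnorm_mult_mat_vec_le_spec_norm) (use D M x(1) in auto)
  also have "\<dots> \<le> spec_norm \<Delta> * (frobenius_norm M * vnorm x)"
    by (intro mult_left_mono vnorm_mult_mat_vec_le_frobenius[OF M x(1)] spec_norm_nonneg)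
  finally have "1 * vnorm x \<le> (spec_norm \<Delta> * frobenius_norm M) * vnorm x" by (simp add: ac_simps)
  thus ?thesis using vnorm_pos[OF x(1,2)] by (simp only: mult_le_cancel_right_pos)
qed

lemma piso_set_vnorm_le:
  assumes len: "length ps = length ks" and P: "P \<in> piso_set ps ks"
    and x: "x \<in> carrier_vec (sum_list ks)"
  shows "vnorm (P *\<^sub>v x) \<le> vnorm x"
proof -
  obtain Ps where Ps: "P = diag_block_mat Ps" "block_shapes Ps ps ks"
      "\<forall>i<length ps. partial_isometry (Ps ! i)"
    using P unfolding piso_set_iff[OF len] by blast
  show ?thesis unfolding Ps(1)
    by (rule diag_block_mat_contraction[OF Ps(2) _ x])
      (use Ps(2,3) partial_isometry_vnorm_le in \<open>auto simp: block_shapes_def\<close>)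
qed

lemma smult_piso_set_in_struct_set:
  assumes len: "length ps = length ks" and P: "P \<in> piso_set ps ks"
  shows "c \<cdot>\<^sub>m P \<in> struct_set ps ks"
proof -
  obtain Ps where Ps: "P = diag_block_mat Ps" "block_shapes Ps ps ks"
    using P unfolding piso_set_iff[OF len] by blast
  have "c \<cdot>\<^sub>m P = diag_block_mat (map (\<lambda>D. c \<cdot>\<^sub>m D) Ps)"
    unfolding Ps(1) by (rule diag_block_mat_map_smult[OF Ps(2), symmetric])
  moreover have "block_shapes (map (\<lambda>D. c \<cdot>\<^sub>m D) Ps) ps ks"
    using Ps(2) unfolding block_shapes_def by auto
  ultimately show ?thesis unfolding struct_set_iff[OF len] by blast
qed

lemma struct_set_singular_of_piso_set:
  assumes len: "length ps = length ks" and pos: "sum_list ps > 0"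
    and M: "M \<in> carrier_mat (sum_list ks) (sum_list ps)"
    and P: "P \<in> piso_set ps ks" and \<rho>: "spectral_radius (P * M) > 0"
  shows "\<exists>\<Delta> \<in> struct_set ps ks. det (1\<^sub>m (sum_list ps) - \<Delta> * M) = 0 \<and>
      spec_norm \<Delta> \<le> 1 / spectral_radius (P * M)"
proof -
  have Pc: "P \<in> carrier_mat (sum_list ps) (sum_list ks)" by (rule piso_set_carrier[OF len P])
  have C: "P * M \<in> carrier_mat (sum_list ps) (sum_list ps)" using Pc M by auto
  obtain \<kappa> where \<kappa>: "eigenvalue (P * M) \<kappa>" "cmod \<kappa> = spectral_radius (P * M)"
    using spectral_radius_mem_max(1)[OF C pos] unfolding spectrum_def by auto
  hence "\<kappa> \<noteq> 0" using \<rho> by auto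
  define \<Delta> where "\<Delta> = (1 / \<kappa>) \<cdot>\<^sub>m P"
  have "\<Delta> \<in> struct_set ps ks" unfolding \<Delta>_def by (rule smult_piso_set_in_struct_set[OF len P])
  moreover have "det (1\<^sub>m (sum_list ps) - \<Delta> * M) = 0"
  proof -
    have "\<Delta> * M = (1 / \<kappa>) \<cdot>\<^sub>m (P * M)" unfolding \<Delta>_def by (rule mult_smult_assoc_mat[OF Pc M])
    thus ?thesis using det_one_minus_smult_eq_0_iff[OF C, of "1 / \<kappa>"] \<open>\<kappa> \<noteq> 0\<close> \<kappa>(1) by simp
  qed
  moreover have "spec_norm \<Delta> \<le> 1 / spectral_radius (P * M)"
  proof (rule spec_norm_le)
    fix x :: "complex vec" assume "x \<in> carrier_vec (dim_col \<Delta>)"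
    hence x: "x \<in> carrier_vec (sum_list ks)" unfolding \<Delta>_def using Pc by simp
    have "vnorm (\<Delta> *\<^sub>v x) = cmod (1 / \<kappa>) * vnorm (P *\<^sub>v x)"
      unfolding \<Delta>_def smult_mat_mult_vec[OF Pc x] vnorm_smult ..
    also have "\<dots> \<le> cmod (1 / \<kappa>) * vnorm x"
      by (intro mult_left_mono piso_set_vnorm_le[OF len P x] norm_ge_zero)
    also have "cmod (1 / \<kappa>) = 1 / spectral_radius (P * M)" using \<kappa>(2) by (simp add: norm_divide)
    finally show "vnorm (\<Delta> *\<^sub>v x) \<le> 1 / spectral_radius (P * M) * vnorm x" .
  qed (use \<rho> in simp)
  ultimately show ?thesis by blast
qed

lemma spec_norm_pos_of_singular:
  assumes "\<Delta> \<in> carrier_mat p k" "M \<in> carrier_mat k p" "det (1\<^sub>m p - \<Delta> * M) = 0"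
  shows "spec_norm \<Delta> > 0"
  using spec_norm_lower_bound_of_singular[OF assms] spec_norm_nonneg[of \<Delta>]
  by (metis less_eq_real_def mult_zero_left not_one_le_zero)

lemma scaled_piso_eigenvalue_of_struct_set_singular:
  assumes len: "length ps = length ks" and M: "M \<in> carrier_mat (sum_list ks) (sum_list ps)"
    and S: "\<Delta> \<in> struct_set ps ks" and det: "det (1\<^sub>m (sum_list ps) - \<Delta> * M) = 0"
  obtains Ps cs where "block_shapes Ps ps ks" "\<forall>i<length ps. partial_isometry (Ps ! i)"
    "length cs = length ps" "\<forall>i<length ps. cmod (cs ! i) \<le> 1"
    "eigenvalue (diag_block_mat (scale_blocks cs Ps) * M) (complex_of_real (1 / spec_norm \<Delta>))"
proof -
  obtain Ds where Ds: "\<Delta> = diag_block_mat Ds" "block_shapes Ds ps ks"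
    using S unfolding struct_set_iff[OF len] by blast
  have Dc: "\<Delta> \<in> carrier_mat (sum_list ps) (sum_list ks)" by (rule struct_set_carrier[OF len S])
  obtain x where x: "x \<in> carrier_vec (sum_list ps)" "x \<noteq> 0\<^sub>v (sum_list ps)" "\<Delta> *\<^sub>v (M *\<^sub>v x) = x"
    by (rule det_one_minus_mult_eq_0_fixed_vec[OF Dc M det])
  define \<beta> where "\<beta> = spec_norm \<Delta>"
  have "\<beta> > 0" unfolding \<beta>_def by (rule spec_norm_pos_of_singular[OF Dc M det])
  define Ds' where "Ds' = map (\<lambda>D. complex_of_real (1 / \<beta>) \<cdot>\<^sub>m D) Ds"
  have Ds': "block_shapes Ds' ps ks" using Ds(2) unfolding Ds'_def block_shapes_def by auto
  have diag_Ds': "diag_block_mat Ds' = complex_of_real (1 / \<beta>) \<cdot>\<^sub>m \<Delta>"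
    unfolding Ds'_def Ds(1) by (rule diag_block_mat_map_smult[OF Ds(2)])
  have "vnorm (diag_block_mat Ds' *\<^sub>v v) \<le> vnorm v" if v: "v \<in> carrier_vec (sum_list ks)" for v
  proof -
    have "vnorm (diag_block_mat Ds' *\<^sub>v v) = (1 / \<beta>) * vnorm (\<Delta> *\<^sub>v v)"
      unfolding diag_Ds' smult_mat_mult_vec[OF Dc v] vnorm_smult using \<open>\<beta> > 0\<close> by (simp add: norm_divide)
    also have "\<dots> \<le> (1 / \<beta>) * (\<beta> * vnorm v)" unfolding \<beta>_def
      by (intro mult_left_mono vnorm_mult_mat_vec_le_spec_norm) (use v Dc spec_norm_nonneg in auto)
    finally show ?thesis using \<open>\<beta> > 0\<close> by simp
  qed
  then obtain Ps cs where PP: "block_shapes Ps ps ks" "\<forall>i<length ps. partial_isometry (Ps ! i)"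
      "length cs = length ps" "\<forall>i<length ps. cmod (cs ! i) \<le> 1"
      "diag_block_mat (scale_blocks cs Ps) *\<^sub>v (M *\<^sub>v x) = diag_block_mat Ds' *\<^sub>v (M *\<^sub>v x)"
    by (rule diag_contraction_agrees_scaled_piso[OF Ds']) (use M x(1) in auto)
  have Qc: "diag_block_mat (scale_blocks cs Ps) \<in> carrier_mat (sum_list ps) (sum_list ks)"
    by (rule diag_block_mat_carrier[OF block_shapes_scale_blocks[OF PP(1,3)]])
  have "(diag_block_mat (scale_blocks cs Ps) * M) *\<^sub>v x = complex_of_real (1 / \<beta>) \<cdot>\<^sub>v x"
    using PP(5) x Qc M Dc unfolding diag_Ds' by (simp add: smult_mat_mult_vec)
  hence "eigenvalue (diag_block_mat (scale_blocks cs Ps) * M) (complex_of_real (1 / \<beta>))"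
    unfolding eigenvalue_def eigenvector_def using x(1,2) Qc M by auto
  thus ?thesis using that PP(1-4) unfolding \<beta>_def by blast
qed

lemma piso_set_of_struct_set_singular:
  assumes len: "length ps = length ks" and pos: "sum_list ps > 0"
    and M: "M \<in> carrier_mat (sum_list ks) (sum_list ps)"
    and S: "\<Delta> \<in> struct_set ps ks" and det: "det (1\<^sub>m (sum_list ps) - \<Delta> * M) = 0"
  shows "\<exists>P \<in> piso_set ps ks. 1 / spec_norm \<Delta> \<le> spectral_radius (P * M)"
proof -
  obtain Ps cs where PP: "block_shapes Ps ps ks" "\<forall>i<length ps. partial_isometry (Ps ! i)"
      "length cs = length ps" "\<forall>i<length ps. cmod (cs ! i) \<le> 1"
      and eig: "eigenvalue (diag_block_mat (scale_blocks cs Ps) * M) (complex_of_real (1 / spec_norm \<Delta>))"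
    by (rule scaled_piso_eigenvalue_of_struct_set_singular[OF len M S det])
  have "spec_norm \<Delta> > 0" by (rule spec_norm_pos_of_singular[OF struct_set_carrier[OF len S] M det])
  hence "0 < 1 / spec_norm \<Delta>" "1 / spec_norm \<Delta> \<le> cmod (complex_of_real (1 / spec_norm \<Delta>))"
    by (simp_all add: norm_divide)
  then obtain cs' \<mu> where U: "length cs' = length ps" "\<forall>i<length ps. cmod (cs' ! i) = 1"
      "eigenvalue (diag_block_mat (scale_blocks cs' Ps) * M) \<mu>" "1 / spec_norm \<Delta> \<le> cmod \<mu>"
    by (rule unimodular_scalars_keep_eigenvalue[OF PP(1) M PP(3,4) eig])
  have P: "diag_block_mat (scale_blocks cs' Ps) \<in> piso_set ps ks"
    by (rule diag_scale_blocks_in_piso_set[OF PP(1,2) U(1,2)])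
  have "cmod \<mu> \<le> spectral_radius (diag_block_mat (scale_blocks cs' Ps) * M)"
    by (rule eigenvalue_le_spectral_radius[OF _ pos U(3)]) (use piso_set_carrier[OF len P] M in auto)
  with P U(4) show ?thesis by force
qed

lemma inverse_Inf_eq_Sup:
  fixes N R :: "real set"
  assumes "N \<noteq> {}" "R \<noteq> {}" and N_pos: "\<And>\<nu>. \<nu> \<in> N \<Longrightarrow> 0 < \<nu>"
    and N_bound: "\<And>\<nu>. \<nu> \<in> N \<Longrightarrow> 1 \<le> \<nu> * b"
    and R_N: "\<And>r. r \<in> R \<Longrightarrow> 0 < r \<Longrightarrow> \<exists>\<nu>\<in>N. \<nu> \<le> 1 / r"
    and N_R: "\<And>\<nu>. \<nu> \<in> N \<Longrightarrow> \<exists>r\<in>R. 1 / \<nu> \<le> r"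
  shows "inverse (Inf N) = Sup R"
proof -
  obtain \<nu>0 where "\<nu>0 \<in> N" using \<open>N \<noteq> {}\<close> by blast
  have "0 < \<nu>0 * b" using N_bound[OF \<open>\<nu>0 \<in> N\<close>] by linarith
  hence "b > 0" using N_pos[OF \<open>\<nu>0 \<in> N\<close>] by (simp add: zero_less_mult_iff)
  have "bdd_below N" by (rule bdd_belowI[of _ 0]) (simp add: N_pos less_imp_le)
  have "1 / b \<le> Inf N"
    using N_bound \<open>b > 0\<close> by (intro cInf_greatest \<open>N \<noteq> {}\<close>) (simp add: divide_le_eq mult.commute)
  moreover have "0 < 1 / b" using \<open>b > 0\<close> by simp
  ultimately have I_pos: "Inf N > 0" by linarith
  have R_le: "r \<le> 1 / Inf N" if rR: "r \<in> R" for r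
  proof (cases "r > 0")
    case True
    then obtain \<nu> where "\<nu> \<in> N" "\<nu> \<le> 1 / r" using R_N rR by blast
    hence "Inf N \<le> 1 / r" using cInf_lower[OF _ \<open>bdd_below N\<close>, of \<nu>] by linarith
    thus ?thesis using True I_pos by (simp add: le_divide_eq mult.commute)
  next
    case False
    have "0 < 1 / Inf N" using I_pos by simp
    thus ?thesis using False by linarith
  qed
  hence "bdd_above R" by (rule bdd_aboveI[of _ "1 / Inf N"])
  have "0 < Sup R"
  proof -
    obtain r where "r \<in> R" "1 / \<nu>0 \<le> r" using N_R[OF \<open>\<nu>0 \<in> N\<close>] by blast
    moreover have "0 < 1 / \<nu>0" using N_pos[OF \<open>\<nu>0 \<in> N\<close>] by simp
    ultimately show ?thesis using cSup_upper[OF _ \<open>bdd_above R\<close>, of r] by linarith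
  qed
  have "1 / Sup R \<le> Inf N"
  proof (rule cInf_greatest[OF \<open>N \<noteq> {}\<close>])
    fix \<nu> assume "\<nu> \<in> N"
    then obtain r where "r \<in> R" "1 / \<nu> \<le> r" using N_R by blast
    hence "1 / \<nu> \<le> Sup R" using cSup_upper[OF _ \<open>bdd_above R\<close>, of r] by linarith
    thus "1 / Sup R \<le> \<nu>" using N_pos[OF \<open>\<nu> \<in> N\<close>] \<open>0 < Sup R\<close>
      by (simp add: divide_le_eq mult.commute)
  qed
  hence "1 / Inf N \<le> Sup R" using I_pos \<open>0 < Sup R\<close> by (simp add: divide_le_eq mult.commute)
  moreover have "Sup R \<le> 1 / Inf N" by (rule cSup_least[OF \<open>R \<noteq> {}\<close> R_le])
  ultimately show ?thesis by (simp add: inverse_eq_divide)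
qed

lemma inverse_Inf_image_eq_Sup_image:
  fixes f :: "'a \<Rightarrow> real" and g :: "'b \<Rightarrow> real"
  assumes "B \<noteq> {}" and g_nonneg: "\<And>y. y \<in> B \<Longrightarrow> 0 \<le> g y"
    and f_nonneg: "\<And>x. x \<in> A \<Longrightarrow> 0 \<le> f x" and f_bound: "\<And>x. x \<in> A \<Longrightarrow> 1 \<le> f x * c"
    and g_f: "\<And>y. y \<in> B \<Longrightarrow> 0 < g y \<Longrightarrow> \<exists>x\<in>A. f x \<le> 1 / g y"
    and f_g: "\<And>x. x \<in> A \<Longrightarrow> \<exists>y\<in>B. 1 / f x \<le> g y"
  shows "(if A = {} then 0 else inverse (Inf (f ` A))) = Sup (g ` B)"
proof (cases "A = {}")
  case True
  have "g y = 0" if "y \<in> B" for y using g_nonneg[OF that] g_f[OF that] True by force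
  hence "g ` B = {0}" using \<open>B \<noteq> {}\<close> by auto
  thus ?thesis using True by simp
next
  case False
  have "f x > 0" if "x \<in> A" for x
    using f_nonneg[OF that] f_bound[OF that] by (cases "f x = 0") simp_all
  hence "inverse (Inf (f ` A)) = Sup (g ` B)"
    by (intro inverse_Inf_eq_Sup[where b = c]) (use False \<open>B \<noteq> {}\<close> f_bound g_f f_g in blast)+
  thus ?thesis using False by simp
qed

theorem theorem3p1:
  fixes ps ks :: "nat list" and M :: "complex mat"
  assumes "length ps = length ks"
    and "ps \<noteq> []"
    and "\<forall>i<length ps. ps ! i > 0"
    and "\<forall>i<length ks. ks ! i > 0"
    and "M \<in> carrier_mat (sum_list ks) (sum_list ps)"
  shows "mu_S ps ks M = Sup ((\<lambda>P. spectral_radius (P * M)) ` piso_set ps ks)"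
proof -
  note len = assms(1) and M = assms(5)
  have pos: "sum_list ps > 0" using assms(2,3) by (cases ps) auto
  define D where "D = {\<Delta> \<in> struct_set ps ks. det (1\<^sub>m (sum_list ps) - \<Delta> * M) = 0}"
  have "(if D = {} then 0 else inverse (Inf (spec_norm ` D))) =
      Sup ((\<lambda>P. spectral_radius (P * M)) ` piso_set ps ks)"
  proof (rule inverse_Inf_image_eq_Sup_image)
    show "piso_set ps ks \<noteq> {}" by (rule piso_set_nonempty[OF len])
    show "0 \<le> spectral_radius (P * M)" if "P \<in> piso_set ps ks" for P
      using piso_set_carrier[OF len that] M by (intro spectral_radius_nonneg[OF _ pos]) simp
    show "0 \<le> spec_norm \<Delta>" for \<Delta> by (rule spec_norm_nonneg)
    show "1 \<le> spec_norm \<Delta> * frobenius_norm M" if "\<Delta> \<in> D" for \<Delta>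
      using that spec_norm_lower_bound_of_singular[OF struct_set_carrier[OF len] M] unfolding D_def by blast
    show "\<exists>\<Delta>\<in>D. spec_norm \<Delta> \<le> 1 / spectral_radius (P * M)"
      if "P \<in> piso_set ps ks" "0 < spectral_radius (P * M)" for P
      using struct_set_singular_of_piso_set[OF len pos M that] unfolding D_def by blast
    show "\<exists>P\<in>piso_set ps ks. 1 / spec_norm \<Delta> \<le> spectral_radius (P * M)" if "\<Delta> \<in> D" for \<Delta>
      using piso_set_of_struct_set_singular[OF len pos M] that unfolding D_def by blast
  qed
  thus ?thesis unfolding mu_S_def Let_def D_def[symmetric] .
qed

end
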